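(* For every $n\ge5$ there exist perfect copositive $n\times n$ matrices in $\mathcal{COP}^n\setminus(\mathcal{S}^n_{\ge0}+\mathcal{N}^n)$ (exceptional perfect copositive matrices).
   Context: $\mathcal{S}^n$: real symmetric $n\times n$ matrices; $\mathcal{S}^n_{\ge0}$: positive semidefinite ones; $\mathcal{N}^n$: entrywise nonnegative symmetric ones; $B[v]=v^\top Bv$; $\mathcal{COP}^n=\{B\in\mathcal{S}^n: B[x]\ge0\ \forall x\in\mathbb{R}^n_{\ge0}\}$; strictly copositive means lying in the interior of $\mathcal{COP}^n$. $\min_{\mathcal{COP}}B=\inf\{B[v]: v\in\mathbb{Z}^n_{\ge0}\setminus\{0\}\}$, $\operatorname{Min}_{\mathcal{COP}}B=\{v\in\mathbb{Z}^n_{\ge0}: B[v]=\min_{\mathcal{COP}}B\}$. A strictly copositive $P$ is perfect copositive if it is the unique $Q\in\mathcal{S}^n$ with $Q[v]=\min_{\mathcal{COP}}P$ for all $v\in\operatorname{Min}_{\mathcal{COP}}P$. *)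

theory Defs
  imports "HOL-Analysis.Analysis"
begin

text \<open>n x n real matrices are rendered as real^'n^'n, the dimension n = CARD('n).\<close>

definition sym_mat :: "real^'n^'n \<Rightarrow> bool" where
  "sym_mat B \<longleftrightarrow> transpose B = B"

definition qf :: "real^'n^'n \<Rightarrow> real^'n \<Rightarrow> real" where
  "qf B v = v \<bullet> (B *v v)"

definition nonneg_vec :: "real^'n \<Rightarrow> bool" where
  "nonneg_vec x \<longleftrightarrow> (\<forall>i. 0 \<le> x $ i)"

definition int_vec :: "real^'n \<Rightarrow> bool" where
  "int_vec x \<longleftrightarrow> (\<forall>i. x $ i \<in> \<int>)"

definition COP :: "(real^'n^'n) set" where
  "COP = {B. sym_mat B \<and> (\<forall>x. nonneg_vec x \<longrightarrow> 0 \<le> qf B x)}"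

definition strictly_copositive :: "real^'n^'n \<Rightarrow> bool" where
  "strictly_copositive B \<longleftrightarrow> B \<in> COP \<and>
     (\<exists>e>0. \<forall>Q. sym_mat Q \<and> dist Q B < e \<longrightarrow> Q \<in> COP)"

definition min_COP :: "real^'n^'n \<Rightarrow> real" where
  "min_COP B = Inf {qf B v | v. int_vec v \<and> nonneg_vec v \<and> v \<noteq> 0}"

definition Min_COP :: "real^'n^'n \<Rightarrow> (real^'n) set" where
  "Min_COP B = {v. int_vec v \<and> nonneg_vec v \<and> qf B v = min_COP B}"

definition perfect_copositive :: "real^'n^'n \<Rightarrow> bool" where
  "perfect_copositive P \<longleftrightarrow> strictly_copositive P \<and>
     (\<exists>!Q. sym_mat Q \<and> (\<forall>v\<in>Min_COP P. qf Q v = min_COP P)) \<and>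
     sym_mat P \<and> (\<forall>v\<in>Min_COP P. qf P v = min_COP P)"

definition PSD :: "(real^'n^'n) set" where
  "PSD = {S. sym_mat S \<and> (\<forall>x. 0 \<le> qf S x)}"

definition NN :: "(real^'n^'n) set" where
  "NN = {N. sym_mat N \<and> (\<forall>i j. 0 \<le> N $ i $ j)}"

definition PSD_plus_NN :: "(real^'n^'n) set" where
  "PSD_plus_NN = {S + N | S N. S \<in> PSD \<and> N \<in> NN}"

end

theory Submission
  imports Defs
begin

text \<open>
  Let \<open>P\<^sub>5\<close> be a suitable \<open>5 \<times> 5\<close> matrix and \<open>g = (0,1,0,1,1)\<close>. The \<open>n \<times> n\<close> matrix \<open>P\<close>
  is built from the \<open>6 \<times> 6\<close> matrix \<open>[[P\<^sub>5, -g/2], [-g\<^sup>T/2, 3]]\<close> by repeating its last row and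
  column \<open>n - 5\<close> times, so that with \<open>y = x|\<^sub>5\<close> and \<open>s\<close> the sum of the remaining coordinates,
  \<open>P[x] = K[y]/12 + 3(s - g\<^sup>Ty/6)\<^sup>2\<close> where \<open>K = 12 P\<^sub>5 - g g\<^sup>T\<close> is an integer matrix.
  Strict copositivity of \<open>K\<close> is certified by a subdivision of the nonnegative orthant into
  simplicial cones whose generators are pairwise \<open>K\<close>-nonnegative, hence \<open>P\<close> is strictly
  copositive. \<open>P\<close> takes integer values on integer vectors, so \<open>min\<^sub>C\<^sub>O\<^sub>P P = 1\<close>, and a
  symmetric matrix vanishing on 15 + 6 + 6 + 1 explicit minimal vectors supported on at most
  seven coordinates is zero, which gives perfection. Finally \<open>W = \<Sum>\<^sub>k w\<^sub>k v\<^sub>k v\<^sub>k\<^sup>T\<close> for four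
  explicit vectors is positive semidefinite and entrywise nonnegative while \<open>\<langle>P, W\<rangle> < 0\<close>, so \<open>P\<close>
  is not a sum of a positive semidefinite and a nonnegative matrix.
\<close>

subsection \<open>Quadratic forms and copositivity\<close>

lemma qf_expand: "qf Q x = (\<Sum>i\<in>UNIV. \<Sum>j\<in>UNIV. Q$i$j * x$i * x$j)"
  unfolding qf_def inner_vec_def matrix_vector_mult_def
  by (simp add: sum_distrib_left algebra_simps)

lemma qf_add: "qf (Q + R) x = qf Q x + qf R x"
  unfolding qf_expand by (simp add: algebra_simps sum.distrib)

lemma qf_diff: "qf (Q - R) x = qf Q x - qf R x"
  unfolding qf_expand by (simp add: algebra_simps sum_subtractf)

lemma qf_scaleR: "qf Q (c *\<^sub>R x) = c\<^sup>2 * qf Q x"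
  unfolding qf_expand by (simp add: sum_distrib_left power2_eq_square algebra_simps)

lemma qf_zero [simp]: "qf Q 0 = 0"
  unfolding qf_expand by simp

lemma sym_mat_nth: "sym_mat Q \<Longrightarrow> Q$j$i = Q$i$j"
  unfolding sym_mat_def by (metis transpose_def vec_lambda_beta)

lemma sym_mat_diff: "sym_mat Q \<Longrightarrow> sym_mat R \<Longrightarrow> sym_mat (Q - R)"
  unfolding sym_mat_def by (simp add: transpose_def vec_eq_iff)

lemma abs_qf_le:
  fixes D :: "real^'n^'n"
  assumes "nonneg_vec z"
  shows "\<bar>qf D z\<bar> \<le> norm D * (\<Sum>i\<in>UNIV. z$i)\<^sup>2"
proof -
  have z: "0 \<le> z$i" for i
    using assms unfolding nonneg_vec_def by auto
  have "\<bar>qf D z\<bar> \<le> (\<Sum>i\<in>UNIV. \<Sum>j\<in>UNIV. \<bar>D$i$j * z$i * z$j\<bar>)"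
    unfolding qf_expand by (rule order_trans[OF sum_abs]) (intro sum_mono sum_abs)
  also have "\<dots> \<le> (\<Sum>i\<in>UNIV. \<Sum>j\<in>UNIV. norm D * z$i * z$j)"
  proof (intro sum_mono)
    fix i j
    have "\<bar>D$i$j\<bar> \<le> norm D"
      using Finite_Cartesian_Product.norm_nth_le[of "D$i" j] Finite_Cartesian_Product.norm_nth_le[of D i] by simp
    then show "\<bar>D$i$j * z$i * z$j\<bar> \<le> norm D * z$i * z$j"
      using z[of i] z[of j] by (simp add: abs_mult mult_right_mono)
  qed
  also have "\<dots> = norm D * (\<Sum>i\<in>UNIV. z$i)\<^sup>2"
    by (simp add: power2_eq_square sum_distrib_left sum_distrib_right algebra_simps)
  finally show ?thesis .
qed

lemma nonneg_vec_sum_pos: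
  assumes "nonneg_vec x" "x \<noteq> 0"
  shows "0 < (\<Sum>i\<in>UNIV. x$i)"
proof -
  have x: "0 \<le> x$i" for i
    using assms(1) unfolding nonneg_vec_def by auto
  obtain j where "x$j \<noteq> 0"
    using assms(2) by (metis vec_eq_iff zero_index)
  with x[of j] have "0 < x$j" by simp
  then show ?thesis
    using x by (intro sum_pos2[of UNIV j]) auto
qed

lemma copositive_margin:
  fixes P :: "real^'n^'n"
  assumes pos: "\<And>x. nonneg_vec x \<Longrightarrow> x \<noteq> 0 \<Longrightarrow> 0 < qf P x"
  obtains m where "0 < m" "\<And>x. nonneg_vec x \<Longrightarrow> m * (\<Sum>i\<in>UNIV. x$i)\<^sup>2 \<le> qf P x"
proof -
  define S where "S = {x::real^'n. nonneg_vec x \<and> (\<Sum>i\<in>UNIV. x$i) = 1}"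
  have "closed S"
    unfolding S_def nonneg_vec_def Collect_conj_eq
    by (intro closed_Int closed_Collect_all closed_Collect_le closed_Collect_eq continuous_intros)
  moreover have "bounded S"
    unfolding bounded_iff
  proof (intro exI ballI)
    fix x assume "x \<in> S"
    then have "(\<Sum>i\<in>UNIV. \<bar>x$i\<bar>) = 1"
      unfolding S_def nonneg_vec_def by simp
    then show "norm x \<le> 1"
      using norm_le_l1_cart[of x] by simp
  qed
  moreover have "axis undefined 1 \<in> S"
    unfolding S_def nonneg_vec_def by (simp add: axis_def)
  moreover have "continuous_on S (qf P)"
    unfolding qf_expand[abs_def] by (intro continuous_intros)
  ultimately obtain x0 where x0: "x0 \<in> S" and x0_min: "\<And>y. y \<in> S \<Longrightarrow> qf P x0 \<le> qf P y"
    using continuous_attains_inf[of S "qf P"] by (metis compact_eq_bounded_closed empty_iff)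
  have "qf P x0 * (\<Sum>i\<in>UNIV. x$i)\<^sup>2 \<le> qf P x" if x: "nonneg_vec x" for x
  proof (cases "x = 0")
    case False
    define \<sigma> where "\<sigma> = (\<Sum>i\<in>UNIV. x$i)"
    have "0 < \<sigma>"
      using nonneg_vec_sum_pos[OF x False] unfolding \<sigma>_def .
    define z where "z = (1/\<sigma>) *\<^sub>R x"
    have "z \<in> S"
      using \<open>0 < \<sigma>\<close> x by (auto simp: S_def z_def nonneg_vec_def \<sigma>_def sum_divide_distrib[symmetric])
    moreover have "x = \<sigma> *\<^sub>R z"
      unfolding z_def using \<open>0 < \<sigma>\<close> by simp
    ultimately show ?thesis
      using x0_min[of z] mult_left_mono[of "qf P x0" "qf P z" "\<sigma>\<^sup>2"] unfolding \<sigma>_def[symmetric]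
      by (simp add: qf_scaleR mult.commute)
  qed simp
  moreover have "0 < qf P x0"
    using x0 pos unfolding S_def by fastforce
  ultimately show ?thesis
    using that by blast
qed

lemma strictly_copositiveI:
  fixes P :: "real^'n^'n"
  assumes sym: "sym_mat P" and pos: "\<And>x. nonneg_vec x \<Longrightarrow> x \<noteq> 0 \<Longrightarrow> 0 < qf P x"
  shows "strictly_copositive P"
proof -
  obtain m where "0 < m" and margin: "\<And>x. nonneg_vec x \<Longrightarrow> m * (\<Sum>i\<in>UNIV. x$i)\<^sup>2 \<le> qf P x"
    using copositive_margin[OF pos] by blast
  have "Q \<in> COP" if Q: "sym_mat Q" "dist Q P < m" for Q
  proof -
    have "0 \<le> qf Q x" if x: "nonneg_vec x" for x
    proof -
      have "norm (Q - P) * (\<Sum>i\<in>UNIV. x$i)\<^sup>2 \<le> m * (\<Sum>i\<in>UNIV. x$i)\<^sup>2"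
        using Q(2) by (simp add: dist_norm mult_right_mono)
      then show ?thesis
        using abs_qf_le[OF x, of "Q - P"] margin[OF x] unfolding qf_diff by linarith
    qed
    then show ?thesis
      unfolding COP_def using Q(1) by auto
  qed
  moreover have "P \<in> COP"
    unfolding COP_def using sym pos by (force simp: less_imp_le)
  ultimately show ?thesis
    unfolding strictly_copositive_def using \<open>0 < m\<close> by blast
qed

lemma min_COP_eqI:
  assumes "int_vec v" "nonneg_vec v" "v \<noteq> 0" "qf P v = m"
    and "\<And>w. int_vec w \<Longrightarrow> nonneg_vec w \<Longrightarrow> w \<noteq> 0 \<Longrightarrow> m \<le> qf P w"
  shows "min_COP P = m"
  unfolding min_COP_def using assms by (intro cInf_eq_minimum) auto

lemma perfect_copositiveI:
  assumes "sym_mat P" "strictly_copositive P"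
    and unique: "\<And>D. sym_mat D \<Longrightarrow> (\<forall>v\<in>Min_COP P. qf D v = 0) \<Longrightarrow> D = 0"
  shows "perfect_copositive P"
proof -
  have "Q = P" if "sym_mat Q" "\<forall>v\<in>Min_COP P. qf Q v = min_COP P" for Q
    using unique[of "Q - P"] that assms(1)
    by (simp add: sym_mat_diff qf_diff Min_COP_def)
  then show ?thesis
    unfolding perfect_copositive_def using assms(1,2)
    by (auto simp: Min_COP_def)
qed

text \<open>A certificate of non-membership in \<open>S\<^sup>n\<^sub>\<ge>\<^sub>0 + N\<^sup>n\<close>: the matrix
  \<open>W = \<Sum>k w\<^sub>k v\<^sub>k v\<^sub>k\<^sup>T\<close> lies in the dual cone (it is positive semidefinite and entrywise
  nonnegative), but pairs negatively with \<open>P\<close>.\<close>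

lemma not_in_PSD_plus_NN_by_certificate:
  fixes P :: "real^'n^'n" and v :: "'k \<Rightarrow> real^'n"
  assumes "\<And>k. k \<in> K \<Longrightarrow> 0 \<le> w k"
    and "\<And>i j. 0 \<le> (\<Sum>k\<in>K. w k * v k $ i * v k $ j)"
    and "(\<Sum>k\<in>K. w k * qf P (v k)) < 0"
  shows "P \<notin> PSD_plus_NN"
proof
  assume "P \<in> PSD_plus_NN"
  then obtain S N where P: "P = S + N" and "S \<in> PSD" "N \<in> NN"
    unfolding PSD_plus_NN_def by blast
  have "0 \<le> (\<Sum>k\<in>K. w k * qf S (v k))"
    using \<open>S \<in> PSD\<close> assms(1) unfolding PSD_def by (auto intro!: sum_nonneg)
  moreover have "(\<Sum>k\<in>K. w k * qf N (v k))
      = (\<Sum>i\<in>UNIV. \<Sum>j\<in>UNIV. N$i$j * (\<Sum>k\<in>K. w k * v k $ i * v k $ j))"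
    unfolding qf_expand
    by (simp add: sum_distrib_left sum_distrib_right algebra_simps sum.swap[of _ K])
  then have "0 \<le> (\<Sum>k\<in>K. w k * qf N (v k))"
    using \<open>N \<in> NN\<close> assms(2) unfolding NN_def by (auto intro!: sum_nonneg)
  ultimately show False
    using assms(3) unfolding P qf_add by (simp add: distrib_left sum.distrib)
qed

subsection \<open>Sparse vectors and block-constant matrices\<close>

lemma sum_swap_outer_pairs:
  "(\<Sum>i\<in>A. \<Sum>j\<in>B. \<Sum>k\<in>C. \<Sum>m\<in>D. f i j k m) = (\<Sum>k\<in>C. \<Sum>m\<in>D. \<Sum>i\<in>A. \<Sum>j\<in>B. f i j k m)"
proof -
  have "(\<Sum>i\<in>A. \<Sum>j\<in>B. \<Sum>k\<in>C. \<Sum>m\<in>D. f i j k m) = (\<Sum>i\<in>A. \<Sum>k\<in>C. \<Sum>j\<in>B. \<Sum>m\<in>D. f i j k m)"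
    by (rule sum.cong[OF refl], rule sum.swap)
  also have "\<dots> = (\<Sum>k\<in>C. \<Sum>i\<in>A. \<Sum>j\<in>B. \<Sum>m\<in>D. f i j k m)"
    by (rule sum.swap)
  also have "\<dots> = (\<Sum>k\<in>C. \<Sum>i\<in>A. \<Sum>m\<in>D. \<Sum>j\<in>B. f i j k m)"
    by (rule sum.cong[OF refl], rule sum.cong[OF refl], rule sum.swap)
  also have "\<dots> = (\<Sum>k\<in>C. \<Sum>m\<in>D. \<Sum>i\<in>A. \<Sum>j\<in>B. f i j k m)"
    by (rule sum.cong[OF refl], rule sum.swap)
  finally show ?thesis .
qed

definition coeff_form :: "nat \<Rightarrow> (nat \<Rightarrow> nat \<Rightarrow> real) \<Rightarrow> real list \<Rightarrow> real" where
  "coeff_form N e c = (\<Sum>m<N. \<Sum>m'<N. c!m * c!m' * e m m')"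

definition axis_comb :: "(nat \<Rightarrow> 'n) \<Rightarrow> real list \<Rightarrow> nat \<Rightarrow> real^'n" where
  "axis_comb \<iota> c N = (\<chi> i. \<Sum>m<N. if \<iota> m = i then c!m else 0)"

lemma qf_axis_comb: "qf Q (axis_comb \<iota> c N) = coeff_form N (\<lambda>m m'. Q $ \<iota> m $ \<iota> m') c"
proof -
  let ?f = "\<lambda>i j m m'. (if \<iota> m = i then c!m else 0) * (if \<iota> m' = j then c!m' else 0) * Q$i$j"
  have "qf Q (axis_comb \<iota> c N) = (\<Sum>i\<in>UNIV. \<Sum>j\<in>UNIV. \<Sum>m<N. \<Sum>m'<N. ?f i j m m')"
    unfolding qf_expand axis_comb_def by (simp add: sum_distrib_left sum_distrib_right algebra_simps)
  also have "\<dots> = (\<Sum>m<N. \<Sum>m'<N. \<Sum>i\<in>UNIV. \<Sum>j\<in>UNIV. ?f i j m m')"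
    by (rule sum_swap_outer_pairs)
  also have "\<dots> = coeff_form N (\<lambda>m m'. Q $ \<iota> m $ \<iota> m') c"
    unfolding coeff_form_def
  proof (intro sum.cong refl)
    fix m m'
    have "?f i j m m' = (if j = \<iota> m' then if i = \<iota> m then c!m * c!m' * Q$i$j else 0 else 0)" for i j
      by auto
    then show "(\<Sum>i\<in>UNIV. \<Sum>j\<in>UNIV. ?f i j m m') = c!m * c!m' * Q $ \<iota> m $ \<iota> m'"
      by (simp add: sum.delta)
  qed
  finally show ?thesis .
qed

lemma axis_comb_int_vec: "(\<And>m. m < N \<Longrightarrow> c!m \<in> \<int>) \<Longrightarrow> int_vec (axis_comb \<iota> c N)"
  unfolding int_vec_def axis_comb_def by (auto intro!: Ints_sum)

lemma axis_comb_nonneg_vec: "(\<And>m. m < N \<Longrightarrow> 0 \<le> c!m) \<Longrightarrow> nonneg_vec (axis_comb \<iota> c N)"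
  unfolding nonneg_vec_def axis_comb_def by (auto intro!: sum_nonneg)

lemma axis_comb_gram_nonneg:
  assumes "\<And>m m'. m < N \<Longrightarrow> m' < N \<Longrightarrow> 0 \<le> (\<Sum>k\<in>K. w k * c k!m * c k!m')"
  shows "0 \<le> (\<Sum>k\<in>K. w k * axis_comb \<iota> (c k) N $ i * axis_comb \<iota> (c k) N $ j)"
proof -
  define A where "A i = {m\<in>{..<N}. \<iota> m = i}" for i
  have entry: "axis_comb \<iota> (c k) N $ i = (\<Sum>m\<in>A i. c k!m)" for k i
    unfolding axis_comb_def A_def by (simp only: vec_lambda_beta sum.inter_filter[OF finite_lessThan])
  have "(\<Sum>k\<in>K. w k * axis_comb \<iota> (c k) N $ i * axis_comb \<iota> (c k) N $ j)
      = (\<Sum>k\<in>K. \<Sum>m\<in>A i. \<Sum>m'\<in>A j. w k * c k!m * c k!m')"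
    by (unfold entry mult.assoc sum_product, simp only: sum_distrib_left mult.assoc)
  also have "\<dots> = (\<Sum>m\<in>A i. \<Sum>m'\<in>A j. \<Sum>k\<in>K. w k * c k!m * c k!m')"
    by (simp only: sum.swap[of _ K])
  also have "0 \<le> \<dots>"
    by (rule sum_nonneg, rule sum_nonneg) (use assms in \<open>auto simp: A_def\<close>)
  ultimately show ?thesis
    by simp
qed

definition fiber_sum :: "('n \<Rightarrow> nat) \<Rightarrow> real^'n \<Rightarrow> nat \<Rightarrow> real" where
  "fiber_sum f x a = (\<Sum>i\<in>{i. f i = a}. x$i)"

lemma qf_pattern_lift:
  fixes f :: "'n::finite \<Rightarrow> nat" and x :: "real^'n"
  assumes "\<And>i. f i < N"
  shows "qf (\<chi> i j. p (f i) (f j)) x = (\<Sum>a<N. \<Sum>b<N. p a b * (fiber_sum f x a * fiber_sum f x b))"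
proof -
  have group: "(\<Sum>i\<in>UNIV. g i) = (\<Sum>a<N. \<Sum>i\<in>{i. f i = a}. g i)" for g :: "'n \<Rightarrow> real"
  proof -
    have "range f \<subseteq> {..<N}"
      using assms by auto
    then show ?thesis
      using sum.group[of UNIV "{..<N}" f g] by simp
  qed
  have "qf (\<chi> i j. p (f i) (f j)) x
      = (\<Sum>a<N. \<Sum>i\<in>{i. f i = a}. \<Sum>b<N. \<Sum>j\<in>{j. f j = b}. p (f i) (f j) * x$i * x$j)"
    unfolding qf_expand group by simp
  also have "\<dots> = (\<Sum>a<N. \<Sum>i\<in>{i. f i = a}. \<Sum>b<N. \<Sum>j\<in>{j. f j = b}. p a b * x$i * x$j)"
    by (intro sum.cong refl) auto
  also have "\<dots> = (\<Sum>a<N. \<Sum>b<N. p a b * (fiber_sum f x a * fiber_sum f x b))"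
    by (intro sum.cong refl, subst sum.swap, intro sum.cong refl)
      (unfold fiber_sum_def sum_product, simp only: sum_distrib_left mult.assoc)
  finally show ?thesis .
qed

subsection \<open>Simplicial certificates of strict copositivity\<close>

definition mat_form :: "int list list \<Rightarrow> (nat \<Rightarrow> real) \<Rightarrow> real" where
  "mat_form K w = (\<Sum>i<length K. \<Sum>j<length K. of_int (K!i!j) * w i * w j)"

definition mat_bilin :: "int list list \<Rightarrow> int list \<Rightarrow> int list \<Rightarrow> int" where
  "mat_bilin K u v = sum_list (map2 (\<lambda>row ui. ui * sum_list (map2 (*) row v)) K u)"

definition square_mat :: "nat \<Rightarrow> 'a list list \<Rightarrow> bool" where
  "square_mat d V \<longleftrightarrow> length V = d \<and> (\<forall>k<d. length (V!k) = d)"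

lemma sum_list_map2:
  "length xs = n \<Longrightarrow> length ys = n \<Longrightarrow> sum_list (map2 f xs ys) = (\<Sum>i<n. f (xs!i) (ys!i))"
  by (simp add: sum_list_sum_nth atLeast0LessThan)

lemma mat_bilin_eq_sum:
  assumes K: "square_mat d K" and "length u = d" "length v = d"
  shows "of_int (mat_bilin K u v) = (\<Sum>i<d. \<Sum>j<d. of_int (K!i!j) * of_int (u!i) * of_int (v!j) :: real)"
proof -
  have "of_int (mat_bilin K u v) = (\<Sum>i<d. of_int (u!i) * (\<Sum>j<d. of_int (K!i!j) * of_int (v!j)) :: real)"
    using assms unfolding mat_bilin_def square_mat_def by (simp add: sum_list_map2)
  then show ?thesis
    by (simp add: sum_distrib_left algebra_simps)
qed

definition cone_point :: "int list list \<Rightarrow> (nat \<Rightarrow> real) \<Rightarrow> nat \<Rightarrow> real" where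
  "cone_point V l c = (\<Sum>k<length V. l k * of_int (V!k!c))"

lemma mat_form_cone_point:
  assumes K: "square_mat d K" and V: "square_mat d V"
  shows "mat_form K (cone_point V l) = (\<Sum>k<d. \<Sum>m<d. l k * l m * of_int (mat_bilin K (V!k) (V!m)))"
proof -
  have "mat_form K (cone_point V l)
      = (\<Sum>i<d. \<Sum>j<d. \<Sum>k<d. \<Sum>m<d. l k * l m * (of_int (K!i!j) * of_int (V!k!i) * of_int (V!m!j)))"
    using K V unfolding mat_form_def cone_point_def square_mat_def
    by (simp add: sum_distrib_left sum_distrib_right algebra_simps)
  also have "\<dots> = (\<Sum>k<d. \<Sum>m<d. \<Sum>i<d. \<Sum>j<d. l k * l m * (of_int (K!i!j) * of_int (V!k!i) * of_int (V!m!j)))"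
    by (rule sum_swap_outer_pairs)
  also have "\<dots> = (\<Sum>k<d. \<Sum>m<d. l k * l m * of_int (mat_bilin K (V!k) (V!m)))"
    using V by (intro sum.cong refl) (simp add: mat_bilin_eq_sum[OF K] square_mat_def sum_distrib_left algebra_simps)
  finally show ?thesis .
qed

lemma mat_form_cone_point_pos:
  assumes K: "square_mat d K" and V: "square_mat d V"
    and diag: "\<And>k. k < d \<Longrightarrow> 0 < mat_bilin K (V!k) (V!k)"
    and off: "\<And>k m. k < d \<Longrightarrow> m < d \<Longrightarrow> k \<noteq> m \<Longrightarrow> 0 \<le> mat_bilin K (V!k) (V!m)"
    and l: "\<And>k. k < d \<Longrightarrow> 0 \<le> l k" and k0: "k0 < d" "l k0 \<noteq> 0"
  shows "0 < mat_form K (cone_point V l)"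
proof -
  let ?b = "\<lambda>k m. l k * l m * of_int (mat_bilin K (V!k) (V!m)) :: real"
  have row: "?b k k \<le> (\<Sum>m<d. ?b k m)" if "k < d" for k
  proof -
    have "0 \<le> (\<Sum>m\<in>{..<d}-{k}. ?b k m)"
      using that l off by (intro sum_nonneg) auto
    then show ?thesis
      using that by (simp add: sum.remove[of "{..<d}" k])
  qed
  have "0 < (\<Sum>k<d. ?b k k)"
  proof (rule sum_pos2[of _ k0])
    have "0 < l k0 * l k0"
      using k0(2) not_real_square_gt_zero by blast
    then show "0 < ?b k0 k0"
      using diag[OF k0(1)] by simp
  next
    show "0 \<le> ?b k k" if "k \<in> {..<d}" for k
      using mult_nonneg_nonneg[OF zero_le_square[of "l k"], of "of_int (mat_bilin K (V!k) (V!k))"]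
        diag[of k] that by simp
  qed (use k0 in auto)
  also have "\<dots> \<le> (\<Sum>k<d. \<Sum>m<d. ?b k m)"
    using row by (intro sum_mono) auto
  finally show ?thesis
    using mat_form_cone_point[OF K V] by simp
qed

lemma sum_remove_two:
  "finite S \<Longrightarrow> i \<in> S \<Longrightarrow> j \<in> S \<Longrightarrow> i \<noteq> j \<Longrightarrow> sum f S = f i + f j + sum f (S - {i, j})"
proof -
  assume S: "finite S" "i \<in> S" "j \<in> S" "i \<noteq> j"
  then have "sum f S = f i + (f j + sum f (S - {i} - {j}))"
    by (simp add: sum.remove[of S i] sum.remove[of "S - {i}" j])
  moreover have "S - {i} - {j} = S - {i, j}"
    by auto
  ultimately show ?thesis
    by (simp add: add.assoc)
qed

text \<open>Splitting the edge \<open>v\<^sub>i v\<^sub>j\<close> of a simplicial cone at \<open>v\<^sub>i + v\<^sub>j\<close>: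
  if \<open>l\<^sub>j \<le> l\<^sub>i\<close>, then \<open>l\<^sub>i v\<^sub>i + l\<^sub>j v\<^sub>j = (l\<^sub>i - l\<^sub>j) v\<^sub>i + l\<^sub>j (v\<^sub>i + v\<^sub>j)\<close> lies in the half
  where \<open>v\<^sub>j\<close> is replaced.\<close>

lemma cone_point_split:
  assumes V: "square_mat d V" and ij: "i < d" "j < d" "i \<noteq> j" and "c < d"
  shows "cone_point (V[j := map2 (+) (V!i) (V!j)]) (l(i := l i - l j)) c = cone_point V l c"
proof -
  let ?V = "V[j := map2 (+) (V!i) (V!j)]" and ?l = "l(i := l i - l j)"
  have len: "length ?V = d" "length V = d" "length (V!i) = d" "length (V!j) = d"
    using V ij unfolding square_mat_def by auto
  have rest: "(\<Sum>k\<in>{..<d}-{i,j}. ?l k * of_int (?V!k!c)) = (\<Sum>k\<in>{..<d}-{i,j}. l k * of_int (V!k!c))"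
    by (rule sum.cong) auto
  show ?thesis
    unfolding cone_point_def len(1,2) using ij len \<open>c < d\<close>
    by (simp add: sum_remove_two[of "{..<d}" i j] rest algebra_simps)
qed

datatype split_tree = Leaf | Split nat nat split_tree split_tree

text \<open>\<open>cone_cert K t V\<close>: the rows of \<open>V\<close> span a simplicial cone, and the subdivision of it
  described by \<open>t\<close> ends in cones whose generators are pairwise \<open>K\<close>-nonnegative with
  \<open>K\<close>-positive squares.\<close>

fun cone_cert :: "int list list \<Rightarrow> split_tree \<Rightarrow> int list list \<Rightarrow> bool" where
  "cone_cert K Leaf V \<longleftrightarrow>
     list_all (\<lambda>k. 0 < mat_bilin K (V!k) (V!k)) [0..<length K] \<and>
     list_all (\<lambda>k. list_all (\<lambda>m. k = m \<or> 0 \<le> mat_bilin K (V!k) (V!m)) [0..<length K]) [0..<length K]"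
| "cone_cert K (Split i j t1 t2) V \<longleftrightarrow> i < length K \<and> j < length K \<and> i \<noteq> j \<and>
     (let w = map2 (+) (V!i) (V!j) in cone_cert K t1 (V[i := w]) \<and> cone_cert K t2 (V[j := w]))"

lemma square_mat_split:
  "square_mat d V \<Longrightarrow> i < d \<Longrightarrow> j < d \<Longrightarrow> square_mat d (V[j := map2 (+) (V!i) (V!j)])"
  unfolding square_mat_def by (simp add: nth_list_update)

lemma mat_form_cong: "(\<And>c. c < length K \<Longrightarrow> w c = w' c) \<Longrightarrow> mat_form K w = mat_form K w'"
  unfolding mat_form_def by simp

lemma cone_point_split_exists:
  assumes V: "square_mat d V" and ij: "i < d" "j < d" "i \<noteq> j" and "l j \<le> l i"
    and l: "\<forall>k<d. 0 \<le> l k" "\<exists>k0<d. l k0 \<noteq> 0"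
  shows "\<exists>l'. (\<forall>k<d. 0 \<le> l' k) \<and> (\<exists>k1<d. l' k1 \<noteq> 0) \<and>
    (\<forall>c<d. cone_point (V[j := map2 (+) (V!i) (V!j)]) l' c = cone_point V l c)"
proof -
  let ?l = "l(i := l i - l j)"
  have "\<forall>k<d. 0 \<le> ?l k"
    using l(1) \<open>l j \<le> l i\<close> by simp
  moreover have "\<exists>k1<d. ?l k1 \<noteq> 0"
  proof (cases "l j = 0")
    case True
    then have "?l = l"
      by auto
    then show ?thesis
      using l(2) by auto
  next
    case False
    then show ?thesis
      using ij by (intro exI[of _ j]) auto
  qed
  moreover have "\<forall>c<d. cone_point (V[j := map2 (+) (V!i) (V!j)]) ?l c = cone_point V l c"
    using cone_point_split[OF V ij] by blast
  ultimately show ?thesis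
    by blast
qed

lemma cone_cert_sound:
  assumes "cone_cert K t V" "square_mat (length K) K" "square_mat (length K) V"
    and "\<forall>k<length K. 0 \<le> l k" "\<exists>k0<length K. l k0 \<noteq> 0"
  shows "0 < mat_form K (cone_point V l)"
  using assms
proof (induction t arbitrary: V l)
  case Leaf
  have "0 < mat_bilin K (V!k) (V!k)" if "k < length K" for k
    using Leaf.prems(1) that by (auto simp: list_all_iff)
  moreover have "0 \<le> mat_bilin K (V!k) (V!m)" if "k < length K" "m < length K" "k \<noteq> m" for k m
    using Leaf.prems(1) that by (simp add: list_all_iff) (metis atLeastLessThan_iff le0)
  moreover obtain k0 where "k0 < length K" "l k0 \<noteq> 0"
    using Leaf.prems(5) by blast
  ultimately show ?case
    using Leaf.prems(2-4) by (intro mat_form_cone_point_pos[of "length K" K V l k0]) auto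
next
  case (Split i j t1 t2)
  let ?w = "map2 (+) (V!i) (V!j)"
  have ij: "i < length K" "j < length K" "i \<noteq> j" and
    certs: "cone_cert K t1 (V[i := ?w])" "cone_cert K t2 (V[j := ?w])"
    using Split.prems(1) by (auto simp: Let_def)
  have w_comm: "map2 (+) (V!j) (V!i) = ?w"
    by (rule nth_equalityI) (auto simp: add.commute)
  show ?case
  proof (cases "l j \<le> l i")
    case True
    then obtain l' where l': "\<forall>k<length K. 0 \<le> l' k" "\<exists>k1<length K. l' k1 \<noteq> 0"
      "\<forall>c<length K. cone_point (V[j := ?w]) l' c = cone_point V l c"
      using cone_point_split_exists[OF Split.prems(3) ij] Split.prems(4,5) by blast
    have "0 < mat_form K (cone_point (V[j := ?w]) l')"
      using Split.IH(2)[OF certs(2) Split.prems(2) square_mat_split[OF Split.prems(3) ij(1,2)] l'(1,2)] .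
    moreover have "mat_form K (cone_point (V[j := ?w]) l') = mat_form K (cone_point V l)"
      using l'(3) by (intro mat_form_cong) simp
    ultimately show ?thesis
      by simp
  next
    case False
    then have "l i \<le> l j"
      by simp
    then obtain l' where l': "\<forall>k<length K. 0 \<le> l' k" "\<exists>k1<length K. l' k1 \<noteq> 0"
      "\<forall>c<length K. cone_point (V[i := ?w]) l' c = cone_point V l c"
      using cone_point_split_exists[OF Split.prems(3) ij(2,1) ij(3)[symmetric]] Split.prems(4,5)
      unfolding w_comm by blast
    have "0 < mat_form K (cone_point (V[i := ?w]) l')"
      using Split.IH(1)[OF certs(1) Split.prems(2) square_mat_split[OF Split.prems(3) ij(2,1),
          unfolded w_comm] l'(1,2)] .
    moreover have "mat_form K (cone_point (V[i := ?w]) l') = mat_form K (cone_point V l)"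
      using l'(3) by (intro mat_form_cong) simp
    ultimately show ?thesis
      by simp
  qed
qed

definition id_rows :: "nat \<Rightarrow> int list list" where
  "id_rows d = map (\<lambda>k. map (\<lambda>c. if k = c then 1 else 0) [0..<d]) [0..<d]"

lemma mat_form_pos_by_cone_cert:
  assumes "cone_cert K t (id_rows (length K))" "square_mat (length K) K"
    and "\<And>k. k < length K \<Longrightarrow> 0 \<le> y k" "k0 < length K" "y k0 \<noteq> 0"
  shows "0 < mat_form K y"
proof -
  have "cone_point (id_rows (length K)) y c = y c" if "c < length K" for c
  proof -
    have "cone_point (id_rows (length K)) y c = (\<Sum>k<length K. if k = c then y c else 0)"
      unfolding cone_point_def id_rows_def using that by (intro sum.cong) auto
    then show ?thesis
      using that by simp
  qed
  moreover have "0 < mat_form K (cone_point (id_rows (length K)) y)"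
    using assms by (intro cone_cert_sound) (auto simp: square_mat_def id_rows_def)
  ultimately show ?thesis
    using mat_form_cong[of K "cone_point (id_rows (length K)) y" y] by simp
qed

subsection \<open>The five-dimensional core\<close>

lemma sum_lessThan_5: "(\<Sum>i<(5::nat). f i) = f 0 + f 1 + f 2 + f 3 + (f 4 :: 'a::comm_monoid_add)"
  by (simp add: eval_nat_numeral add.assoc)

lemma sum_lessThan_6: "(\<Sum>i<(6::nat). f i) = f 0 + f 1 + f 2 + f 3 + f 4 + (f 5 :: 'a::comm_monoid_add)"
  by (simp add: eval_nat_numeral add.assoc)

lemma sum_lessThan_7: "(\<Sum>i<(7::nat). f i) = f 0 + f 1 + f 2 + f 3 + f 4 + f 5 + (f 6 :: 'a::comm_monoid_add)"
  by (simp add: eval_nat_numeral add.assoc)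

lemma less_5_iff: "(a::nat) < 5 \<longleftrightarrow> a = 0 \<or> a = 1 \<or> a = 2 \<or> a = 3 \<or> a = 4"
  by auto

definition core_entries :: "real list list" where
  "core_entries =
    [[ 2,   -1,     1,     3,    -4  ],
     [-1,    1,    -3/2,   3/2,   3/2],
     [ 1,   -3/2,   3,    -7/2,   9/2],
     [ 3,    3/2,  -7/2,   5,   -13/2],
     [-4,    3/2,   9/2, -13/2,   9  ]]"

definition link :: "real list" where
  "link = [0, 1, 0, 1, 1]"

text \<open>All indices \<open>\<ge> 5\<close> of \<open>pattern\<close> stand for its last row and column, which are repeated
  on every coordinate outside the core.\<close>

definition pattern :: "nat \<Rightarrow> nat \<Rightarrow> real" where
  "pattern a b =
    (if a < 5 \<and> b < 5 then core_entries!a!b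
     else if a < 5 then - link!a / 2
     else if b < 5 then - link!b / 2
     else 3)"

lemma pattern_sym: "pattern a b = pattern b a"
proof (cases "a < 5 \<and> b < 5")
  case True
  then show ?thesis
    unfolding pattern_def less_5_iff by (elim conjE disjE) (simp_all add: core_entries_def)
qed (auto simp: pattern_def)

lemma pattern_min_5: "pattern (min a 5) (min b 5) = pattern a b"
  by (simp add: pattern_def min_def)

definition reduced_matrix :: "int list list" where
  "reduced_matrix =
    [[ 24, -12,  12,  36, -48],
     [-12,  11, -18,  17,  17],
     [ 12, -18,  36, -42,  54],
     [ 36,  17, -42,  59, -79],
     [-48,  17,  54, -79, 107]]"

lemma length_reduced_matrix: "length reduced_matrix = 5"
  by (simp add: reduced_matrix_def)

lemma square_reduced_matrix: "square_mat (length reduced_matrix) reduced_matrix"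
  by (simp add: square_mat_def reduced_matrix_def less_Suc_eq)

lemma mat_form_reduced_matrix:
  "mat_form reduced_matrix y =
     12 * (\<Sum>a<5. \<Sum>b<5. core_entries!a!b * y a * y b) - (\<Sum>a<5. link!a * y a)\<^sup>2"
  unfolding mat_form_def length_reduced_matrix
  by (simp add: reduced_matrix_def core_entries_def link_def sum_lessThan_5 power2_eq_square
      algebra_simps)

definition core_tree :: split_tree where
  "core_tree = (Split 3 4 (Split 0 4 (Split 1 2 Leaf (Split 1 2 Leaf Leaf)) (Split 0 4 (Split 1 2
    Leaf (Split 0 1 (Split 1 2 Leaf Leaf) Leaf)) (Split 1 2 (Split 0 3 (Split 0 3 Leaf Leaf) Leaf)
    (Split 0 1 (Split 0 2 (Split 0 1 (Split 1 2 (Split 0 2 Leaf Leaf) (Split 1 4 Leaf Leaf)) (Split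
    1 2 Leaf Leaf)) (Split 1 2 (Split 0 4 Leaf Leaf) (Split 0 4 (Split 0 1 (Split 1 4 (Split 0 4
    Leaf Leaf) Leaf) (Split 1 4 Leaf Leaf)) (Split 1 4 Leaf (Split 0 1 Leaf Leaf))))) (Split 0 3
    (Split 1 2 (Split 0 3 Leaf Leaf) (Split 1 4 (Split 0 3 Leaf Leaf) (Split 0 3 Leaf Leaf)))
    (Split 1 2 Leaf (Split 1 4 Leaf Leaf))))))) (Split 2 3 (Split 3 4 (Split 0 1 (Split 3 4 (Split
    2 4 (Split 3 4 (Split 2 3 (Split 0 1 Leaf Leaf) (Split 0 1 Leaf Leaf)) (Split 2 3 (Split 0 1
    Leaf Leaf) (Split 2 4 (Split 0 1 Leaf Leaf) (Split 0 1 Leaf Leaf)))) (Split 3 4 (Split 0 1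
    (Split 1 2 Leaf Leaf) Leaf) (Split 0 1 (Split 1 2 Leaf Leaf) Leaf))) (Split 0 1 (Split 1 2 Leaf
    Leaf) Leaf)) (Split 0 4 (Split 3 4 (Split 2 4 (Split 0 4 (Split 3 4 (Split 2 3 Leaf Leaf)
    (Split 2 3 Leaf (Split 2 4 Leaf Leaf))) (Split 2 3 Leaf Leaf)) (Split 3 4 Leaf Leaf)) Leaf)
    Leaf)) (Split 0 1 (Split 0 1 (Split 1 2 Leaf Leaf) Leaf) Leaf)) (Split 1 2 (Split 0 4 (Split 3
    4 (Split 0 4 Leaf Leaf) (Split 1 3 (Split 2 3 Leaf Leaf) Leaf)) (Split 1 3 (Split 2 3 Leaf
    Leaf) Leaf)) (Split 0 1 (Split 3 4 (Split 0 2 (Split 0 1 (Split 1 2 (Split 0 2 Leaf Leaf) Leaf)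
    (Split 1 2 Leaf Leaf)) (Split 1 2 Leaf (Split 0 1 Leaf Leaf))) (Split 0 2 (Split 0 1 (Split 1 2
    (Split 1 3 (Split 2 3 Leaf (Split 0 2 (Split 1 2 Leaf Leaf) Leaf)) (Split 0 2 (Split 2 3 Leaf
    Leaf) Leaf)) (Split 2 3 (Split 1 3 Leaf Leaf) Leaf)) (Split 2 3 Leaf (Split 1 2 Leaf Leaf)))
    (Split 1 2 Leaf (Split 0 1 (Split 1 3 Leaf Leaf) Leaf)))) (Split 0 4 (Split 3 4 (Split 1 2
    (Split 0 4 Leaf Leaf) (Split 0 4 Leaf Leaf)) (Split 1 2 (Split 2 3 Leaf Leaf) Leaf)) (Split 1 2
    (Split 2 3 Leaf Leaf) Leaf))))))"

lemma cone_cert_reduced_matrix: "cone_cert reduced_matrix core_tree (id_rows (length reduced_matrix))"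
  unfolding core_tree_def by code_simp

lemma reduced_matrix_form_pos:
  assumes "\<And>a. a < 5 \<Longrightarrow> 0 \<le> y a" "a0 < 5" "y a0 \<noteq> 0"
  shows "0 < mat_form reduced_matrix y"
  using mat_form_pos_by_cone_cert[OF cone_cert_reduced_matrix square_reduced_matrix] assms
  unfolding length_reduced_matrix by blast

definition pattern_form :: "(nat \<Rightarrow> real) \<Rightarrow> real" where
  "pattern_form X = (\<Sum>a<6. \<Sum>b<6. pattern a b * X a * X b)"

lemma pattern_form_eq:
  "pattern_form X = mat_form reduced_matrix X / 12 + 3 * (X 5 - (\<Sum>a<5. link!a * X a) / 6)\<^sup>2"
  unfolding pattern_form_def mat_form_reduced_matrix
  by (simp add: sum_lessThan_5 sum_lessThan_6 pattern_def core_entries_def link_def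
      power2_eq_square field_simps)

lemma pattern_form_pos:
  assumes nonneg: "\<And>a. a < 6 \<Longrightarrow> 0 \<le> X a" and "a0 < 6" "X a0 \<noteq> 0"
  shows "0 < pattern_form X"
proof (cases "\<exists>a<5. X a \<noteq> 0")
  case True
  then have "0 < mat_form reduced_matrix X"
    using nonneg by (auto intro: reduced_matrix_form_pos)
  then show ?thesis
    unfolding pattern_form_eq by (simp add: add_pos_nonneg)
next
  case False
  then have "a0 = 5"
    using assms(2,3) by (cases "a0 < 5") auto
  then have "pattern_form X = 3 * (X 5)\<^sup>2"
    using False unfolding pattern_form_def by (simp add: sum_lessThan_6 pattern_def power2_eq_square)
  then show ?thesis
    using assms(3) \<open>a0 = 5\<close> by simp
qed

lemma pattern_form_Ints:
  assumes "\<And>a. a < 6 \<Longrightarrow> X a \<in> \<int>"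
  shows "pattern_form X \<in> \<int>"
proof -
  have "pattern_form X =
      2*X 0^2 + X 1^2 + 3*X 2^2 + 5*X 3^2 + 9*X 4^2 + 3*X 5^2
      - 2*X 0*X 1 + 2*X 0*X 2 + 6*X 0*X 3 - 8*X 0*X 4 - 3*X 1*X 2 + 3*X 1*X 3 + 3*X 1*X 4
      - 7*X 2*X 3 + 9*X 2*X 4 - 13*X 3*X 4 - X 5 * (X 1 + X 3 + X 4)"
    unfolding pattern_form_def
    by (simp add: sum_lessThan_6 pattern_def core_entries_def link_def power2_eq_square algebra_simps)
  then show ?thesis
    using assms by (simp add: Ints_add Ints_diff Ints_mult Ints_power)
qed

text \<open>Coefficients of minimal vectors on the five core coordinates, followed by one or two
  further coordinates; their rank-one matrices span the symmetric matrices on these coordinates.\<close>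

definition core_min_coeffs :: "real list list" where
  "core_min_coeffs =
    [[0,1,0,0,0], [0,0,0,1,1], [0,0,1,1,0], [0,1,1,0,0], [1,1,0,0,0],
     [0,2,1,0,0], [1,0,0,1,1], [2,0,0,0,1], [0,0,1,2,1], [0,1,2,1,0],
     [1,2,1,0,0], [2,1,0,0,1], [0,2,2,1,0], [1,3,1,0,0], [3,1,0,0,1]]"

definition tail_min_coeffs :: "real list list" where
  "tail_min_coeffs =
    [[0,0,1,2,1,1], [0,0,0,3,2,1], [0,2,2,1,0,1], [1,0,0,2,2,1], [1,3,1,0,0,1], [3,2,0,0,1,1]]"

definition pair_min_coeffs :: "real list" where
  "pair_min_coeffs = [0,0,1,6,4,1,1]"

lemma coeff_form_min_coeffs:
  "\<forall>c\<in>set core_min_coeffs. coeff_form 5 pattern c = 1"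
  "\<forall>c\<in>set tail_min_coeffs. coeff_form 6 pattern c = 1"
  "coeff_form 7 pattern pair_min_coeffs = 1"
  by (simp add: core_min_coeffs_def tail_min_coeffs_def pair_min_coeffs_def coeff_form_def
      sum_lessThan_5 sum_lessThan_6 sum_lessThan_7 pattern_def core_entries_def link_def)+

lemma min_coeffs_Nats:
  "\<forall>c\<in>set core_min_coeffs. \<forall>m<5. c!m \<in> \<nat>"
  "\<forall>c\<in>set tail_min_coeffs. \<forall>m<6. c!m \<in> \<nat>"
  "\<forall>m<7. pair_min_coeffs!m \<in> \<nat>"
  by (simp_all add: core_min_coeffs_def tail_min_coeffs_def pair_min_coeffs_def less_Suc_eq
      numeral_eq_Suc)

lemma core_min_coeffs_determine:
  assumes sym: "\<And>a b. e a b = e b a" and zero: "\<forall>c\<in>set core_min_coeffs. coeff_form 5 e c = 0"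
  shows "\<forall>a<5. \<forall>b<5. e a b = 0"
proof -
  note sym' = sym[of 1 0] sym[of 2 0] sym[of 3 0] sym[of 4 0] sym[of 2 1] sym[of 3 1] sym[of 4 1]
    sym[of 3 2] sym[of 4 2] sym[of 4 3]
  have "e 0 0 = 0 \<and> e 1 1 = 0 \<and> e 2 2 = 0 \<and> e 3 3 = 0 \<and> e 4 4 = 0 \<and>
      e 0 1 = 0 \<and> e 0 2 = 0 \<and> e 0 3 = 0 \<and> e 0 4 = 0 \<and> e 1 2 = 0 \<and>
      e 1 3 = 0 \<and> e 1 4 = 0 \<and> e 2 3 = 0 \<and> e 2 4 = 0 \<and> e 3 4 = 0"
    using zero by (simp add: core_min_coeffs_def coeff_form_def sum_lessThan_5 sym'[simplified])
  then show ?thesis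
    using sym' by (auto simp: less_5_iff)
qed

lemma tail_min_coeffs_determine:
  assumes sym: "\<And>a b. e a b = e b a" and core: "\<forall>a<5. \<forall>b<5. e a b = 0"
    and zero: "\<forall>c\<in>set tail_min_coeffs. coeff_form 6 e c = 0"
  shows "\<forall>a<6. e a 5 = 0"
proof -
  note sym' = sym[of 5 0] sym[of 5 1] sym[of 5 2] sym[of 5 3] sym[of 5 4]
  have "e 0 5 = 0 \<and> e 1 5 = 0 \<and> e 2 5 = 0 \<and> e 3 5 = 0 \<and> e 4 5 = 0 \<and> e 5 5 = 0"
    using zero core by (simp add: tail_min_coeffs_def coeff_form_def sum_lessThan_6 sym'[simplified])
  then show ?thesis
    by (auto simp: less_Suc_eq numeral_eq_Suc)
qed

lemma pair_min_coeffs_determine: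
  assumes sym: "\<And>a b. e a b = e b a"
    and others: "\<And>m m'. m < 7 \<Longrightarrow> m' < 7 \<Longrightarrow> {m, m'} \<noteq> {5, 6} \<Longrightarrow> e m m' = 0"
    and zero: "coeff_form 7 e pair_min_coeffs = 0"
  shows "e 5 6 = 0"
  using zero others sym[of 6 5]
  by (simp add: pair_min_coeffs_def coeff_form_def sum_lessThan_7 doubleton_eq_iff)

definition cert_weights :: "real list" where
  "cert_weights = [1, 2, 2, 4]"

definition cert_coeffs :: "real list list" where
  "cert_coeffs = [[0,2,2,1,0], [1,2,2,2,1], [2,-1,-1,1,2], [2,2,0,-1,0]]"

lemma cert_gram_nonneg:
  "m < 5 \<Longrightarrow> m' < 5 \<Longrightarrow> 0 \<le> (\<Sum>k<4. cert_weights!k * cert_coeffs!k!m * cert_coeffs!k!m')"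
  unfolding less_5_iff
  by (elim disjE) (simp_all add: cert_weights_def cert_coeffs_def eval_nat_numeral)

lemma cert_pattern_value: "(\<Sum>k<4. cert_weights!k * coeff_form 5 pattern (cert_coeffs!k)) = -25"
  by (simp add: cert_weights_def cert_coeffs_def coeff_form_def sum_lessThan_5 eval_nat_numeral
      pattern_def core_entries_def)

subsection \<open>The exceptional matrix\<close>

locale core_embedding =
  fixes \<alpha> :: "nat \<Rightarrow> 'n::finite"
  assumes inj_\<alpha>: "inj_on \<alpha> {..<5}"
begin

definition class_of :: "'n \<Rightarrow> nat" where
  "class_of i = (if i \<in> \<alpha> ` {..<5} then the_inv_into {..<5} \<alpha> i else 5)"

lemma class_of_\<alpha>: "a < 5 \<Longrightarrow> class_of (\<alpha> a) = a"
  unfolding class_of_def using inj_\<alpha> by (auto simp: the_inv_into_f_f)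

lemma class_of_less_6: "class_of i < 6"
  unfolding class_of_def using the_inv_into_into[OF inj_\<alpha>, of i "{..<5}"] by auto

lemma class_of_less_5_iff: "class_of i < 5 \<longleftrightarrow> i \<in> \<alpha> ` {..<5}"
  using class_of_\<alpha> by (auto simp: class_of_def)

definition exc_matrix :: "real^'n^'n" where
  "exc_matrix = (\<chi> i j. pattern (class_of i) (class_of j))"

lemma sym_exc_matrix: "sym_mat exc_matrix"
  unfolding sym_mat_def exc_matrix_def transpose_def by (simp add: pattern_sym)

lemma qf_exc_matrix: "qf exc_matrix x = pattern_form (fiber_sum class_of x)"
  unfolding exc_matrix_def pattern_form_def qf_pattern_lift[of class_of 6, OF class_of_less_6]
  by (simp add: algebra_simps)

lemma qf_exc_matrix_pos:
  assumes x: "nonneg_vec x" "x \<noteq> 0"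
  shows "0 < qf exc_matrix x"
proof -
  have x_nonneg: "0 \<le> x$i" for i
    using x(1) unfolding nonneg_vec_def by auto
  obtain i where "x$i \<noteq> 0"
    using x(2) by (metis vec_eq_iff zero_index)
  then have "0 < x$i"
    using x_nonneg[of i] by simp
  then have "0 < fiber_sum class_of x (class_of i)"
    unfolding fiber_sum_def using x_nonneg by (intro sum_pos2[of _ i]) auto
  then show ?thesis
    unfolding qf_exc_matrix using class_of_less_6 x_nonneg
    by (intro pattern_form_pos[of _ "class_of i"]) (auto simp: fiber_sum_def intro: sum_nonneg)
qed

lemma qf_exc_matrix_Ints: "int_vec x \<Longrightarrow> qf exc_matrix x \<in> \<int>"
  unfolding qf_exc_matrix int_vec_def fiber_sum_def by (auto intro!: pattern_form_Ints Ints_sum)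

lemma strictly_copositive_exc_matrix: "strictly_copositive exc_matrix"
  using strictly_copositiveI[OF sym_exc_matrix qf_exc_matrix_pos] .

lemma qf_exc_matrix_axis_comb:
  assumes "\<And>m. m < N \<Longrightarrow> class_of (\<iota> m) = min m 5"
  shows "qf exc_matrix (axis_comb \<iota> c N) = coeff_form N pattern c"
  unfolding qf_axis_comb coeff_form_def exc_matrix_def using assms
  by (intro sum.cong refl) (simp add: pattern_min_5)

lemma min_COP_exc_matrix: "min_COP exc_matrix = 1"
proof (rule min_COP_eqI)
  let ?v = "axis_comb \<alpha> [0,1,0,0,0] 5"
  show "qf exc_matrix ?v = 1"
    using coeff_form_min_coeffs(1) by (simp add: qf_exc_matrix_axis_comb class_of_\<alpha> core_min_coeffs_def)
  show "int_vec ?v" "nonneg_vec ?v"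
    by (auto intro!: axis_comb_int_vec axis_comb_nonneg_vec simp: less_5_iff)
  show "?v \<noteq> 0"
    using \<open>qf exc_matrix ?v = 1\<close> by auto
  show "1 \<le> qf exc_matrix w" if "int_vec w" "nonneg_vec w" "w \<noteq> 0" for w
    using qf_exc_matrix_pos[OF that(2,3)] Ints_nonzero_abs_ge1[OF qf_exc_matrix_Ints[OF that(1)]] by simp
qed

lemma axis_comb_Min_COP_exc_matrix:
  assumes "\<And>m. m < N \<Longrightarrow> class_of (\<iota> m) = min m 5" "\<forall>m<N. c!m \<in> \<nat>"
    and "coeff_form N pattern c = 1"
  shows "axis_comb \<iota> c N \<in> Min_COP exc_matrix"
proof -
  have "c!m \<in> \<int> \<and> 0 \<le> c!m" if "m < N" for m
    using assms(2) that by (metis Nats_cases of_nat_0_le_iff Ints_of_nat)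
  then show ?thesis
    unfolding Min_COP_def min_COP_exc_matrix using assms(1,3)
    by (auto simp: qf_exc_matrix_axis_comb intro!: axis_comb_int_vec axis_comb_nonneg_vec)
qed

definition slot :: "'n \<Rightarrow> 'n \<Rightarrow> nat \<Rightarrow> 'n" where
  "slot t u m = (if m < 5 then \<alpha> m else if m = 5 then t else u)"

lemma class_of_slot: "class_of t = 5 \<Longrightarrow> class_of u = 5 \<Longrightarrow> m < 7 \<Longrightarrow> class_of (slot t u m) = min m 5"
  by (simp add: slot_def class_of_\<alpha>)

lemma annihilator_coeff_form:
  assumes vanish: "\<forall>v\<in>Min_COP exc_matrix. qf D v = 0"
    and "\<And>m. m < N \<Longrightarrow> class_of (\<iota> m) = min m 5" "\<forall>m<N. c!m \<in> \<nat>" "coeff_form N pattern c = 1"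
  shows "coeff_form N (\<lambda>m m'. D $ \<iota> m $ \<iota> m') c = 0"
  using bspec[OF vanish axis_comb_Min_COP_exc_matrix[OF assms(2-4)]] by (simp add: qf_axis_comb)

lemma annihilator_core:
  assumes "sym_mat D" "\<forall>v\<in>Min_COP exc_matrix. qf D v = 0"
  shows "\<forall>a<5. \<forall>b<5. D $ \<alpha> a $ \<alpha> b = 0"
  using annihilator_coeff_form[OF assms(2), of 5 \<alpha>] min_coeffs_Nats(1) coeff_form_min_coeffs(1)
    sym_mat_nth[OF assms(1)] class_of_\<alpha>
  by (intro core_min_coeffs_determine) auto

lemma annihilator_tail:
  assumes "sym_mat D" "\<forall>v\<in>Min_COP exc_matrix. qf D v = 0" and "class_of t = 5"
  shows "(\<forall>a<5. D $ \<alpha> a $ t = 0) \<and> D $ t $ t = 0"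
proof -
  have "\<forall>a<6. D $ slot t t a $ slot t t 5 = 0"
    using annihilator_coeff_form[OF assms(2), of 6 "slot t t"] min_coeffs_Nats(2)
      coeff_form_min_coeffs(2) sym_mat_nth[OF assms(1)] annihilator_core[OF assms(1,2)]
      class_of_slot[OF assms(3) assms(3)]
    by (intro tail_min_coeffs_determine) (auto simp: slot_def)
  note tail_slot = this[rule_format]
  have "D $ \<alpha> a $ t = 0" if "a < 5" for a
    using tail_slot[of a] that by (simp add: slot_def)
  then show ?thesis
    using tail_slot[of 5] by (simp add: slot_def)
qed

lemma annihilator_eq_0:
  assumes sym: "sym_mat D" and vanish: "\<forall>v\<in>Min_COP exc_matrix. qf D v = 0"
  shows "D = 0"
proof -
  have off_tail: "D$i$j = 0" if "\<not> (class_of i = 5 \<and> class_of j = 5 \<and> i \<noteq> j)" for i j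
  proof -
    have core_or_tail: "(\<exists>a<5. k = \<alpha> a) \<or> class_of k = 5" for k
      using class_of_less_5_iff[of k] class_of_less_6[of k] by (auto simp: less_Suc_eq)
    show ?thesis
      using core_or_tail[of i] core_or_tail[of j] that annihilator_core[OF sym vanish]
        annihilator_tail[OF sym vanish] sym_mat_nth[OF sym]
      by (auto simp: class_of_\<alpha>)
  qed
  have pair: "D$t$u = 0" if "class_of t = 5" "class_of u = 5" "t \<noteq> u" for t u
  proof -
    have "D $ slot t u 5 $ slot t u 6 = 0"
    proof (rule pair_min_coeffs_determine)
      show "coeff_form 7 (\<lambda>m m'. D $ slot t u m $ slot t u m') pair_min_coeffs = 0"
        using annihilator_coeff_form[OF vanish, of 7 "slot t u"] min_coeffs_Nats(3)
          coeff_form_min_coeffs(3) class_of_slot that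
        by simp
      show "D $ slot t u m $ slot t u m' = 0" if "m < 7" "m' < 7" "{m, m'} \<noteq> {5, 6}" for m m'
        using that \<open>t \<noteq> u\<close> class_of_slot[OF \<open>class_of t = 5\<close> \<open>class_of u = 5\<close>]
        by (intro off_tail) (auto simp: slot_def doubleton_eq_iff)
    qed (rule sym_mat_nth[OF sym])
    then show ?thesis
      by (simp add: slot_def)
  qed
  show ?thesis
    using off_tail pair by (auto simp: vec_eq_iff)
qed

lemma exc_matrix_not_in_PSD_plus_NN: "exc_matrix \<notin> PSD_plus_NN"
proof (rule not_in_PSD_plus_NN_by_certificate[of "{..<4}" "\<lambda>k. cert_weights!k"
      "\<lambda>k. axis_comb \<alpha> (cert_coeffs!k) 5"])
  show "0 \<le> (\<Sum>k<4. cert_weights!k * axis_comb \<alpha> (cert_coeffs!k) 5 $ i * axis_comb \<alpha> (cert_coeffs!k) 5 $ j)"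
    for i j
    by (rule axis_comb_gram_nonneg) (rule cert_gram_nonneg)
  show "(\<Sum>k<4. cert_weights!k * qf exc_matrix (axis_comb \<alpha> (cert_coeffs!k) 5)) < 0"
    using cert_pattern_value by (simp add: qf_exc_matrix_axis_comb class_of_\<alpha>)
qed (auto simp: cert_weights_def less_Suc_eq numeral_eq_Suc)

lemma perfect_copositive_exc_matrix: "perfect_copositive exc_matrix"
  using sym_exc_matrix strictly_copositive_exc_matrix annihilator_eq_0 by (rule perfect_copositiveI)

end

theorem corollary5p7:
  assumes "CARD('n::finite) \<ge> 5"
  shows "\<exists>P :: real^'n^'n. perfect_copositive P \<and> P \<in> COP \<and> P \<notin> PSD_plus_NN"
proof -
  obtain A :: "'n set" where A: "card A = 5"
    using obtain_subset_with_card_n[of 5 "UNIV :: 'n set"] assms by auto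
  then have "finite A"
    by (metis card.infinite zero_neq_numeral)
  then obtain \<alpha> where "bij_betw \<alpha> {0..<card A} A"
    using ex_bij_betw_nat_finite by blast
  then interpret core_embedding \<alpha>
    by unfold_locales (simp add: A bij_betw_def atLeast0LessThan)
  show ?thesis
    using perfect_copositive_exc_matrix strictly_copositive_exc_matrix exc_matrix_not_in_PSD_plus_NN
    unfolding strictly_copositive_def by blast
qed

end
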